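(* Let $d\ge 2$ and $0<a<b\leq d$ be integers and $n\geq 1$. Then $$\ell_d^{(a,b)}(n)=\sum_{k=0}^{\lfloor (n-a)/d\rfloor}\binom{2k+n-a-dk}{n-a-dk}+\sum_{k=0}^{\lfloor (n-b)/d\rfloor}\binom{2k+1+n-b-dk}{n-b-dk},$$ where a sum with negative upper limit is empty.
   Context: A partition is a finite nonincreasing sequence of positive integers (its parts); its size is not fixed. The perimeter of a partition with largest part $\alpha$ and $\lambda$ parts is $\alpha+\lambda-1$. For $0<a<b\le d$, $\ell_d^{(a,b)}(n)$ is the number of partitions of perimeter $n$ all of whose parts are congruent to $a$ or $b$ modulo $d$. *)

theory Defs
  imports Main
begin

text \<open>A partition: a nonempty finite nonincreasing list of positive integers (its parts).
  Nonemptiness is needed for the largest part (and hence the perimeter) to exist.\<close>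
definition is_partition :: "nat list \<Rightarrow> bool" where
  "is_partition p \<longleftrightarrow> p \<noteq> [] \<and> sorted_wrt (\<ge>) p \<and> (\<forall>x\<in>set p. 0 < x)"

definition perimeter :: "nat list \<Rightarrow> nat" where
  "perimeter p = Max (set p) + length p - 1"

definition ell :: "nat \<Rightarrow> nat \<Rightarrow> nat \<Rightarrow> nat \<Rightarrow> nat" where
  "ell d a b n = card {p. is_partition p \<and> perimeter p = n \<and>
      (\<forall>x\<in>set p. x mod d = a mod d \<or> x mod d = b mod d)}"

end

theory Submission
  imports Defs "HOL-Library.Multiset"
begin

text \<open>Enumerate the admissible parts increasingly as v 0 < v 1 < ... . A partition with parts in
  the range of v is then a nonincreasing list of indices; if its largest index is t, its perimeter
  is n exactly when the remaining n - v t indices form a nonincreasing list bounded by t, and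
  there are binomial(n - v t + t, t) of those (multisets of size n - v t from t + 1 values).
  Splitting the indices by parity gives the two sums.\<close>

lemma card_nonincreasing_lists_bounded:
  "card {zs::nat list. length zs = m \<and> sorted_wrt (\<ge>) zs \<and> (\<forall>z\<in>set zs. z \<le> t)} = (m + t) choose m"
proof -
  let ?Z = "{zs::nat list. length zs = m \<and> sorted_wrt (\<ge>) zs \<and> (\<forall>z\<in>set zs. z \<le> t)}"
  have "bij_betw mset ?Z (multisets_of_size {0..t} m)"
  proof (rule bij_betw_imageI)
    show "inj_on mset ?Z"
    proof
      fix xs ys assume xs: "xs \<in> ?Z" and ys: "ys \<in> ?Z" and "mset xs = mset ys"
      then have "mset (rev xs) = mset (rev ys)" by simp
      moreover have "sorted (rev xs)" "sorted (rev ys)" using xs ys by (auto simp: sorted_wrt_rev)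
      ultimately have "rev xs = rev ys" using properties_for_sort by metis
      then show "xs = ys" by simp
    qed
    show "mset ` ?Z = multisets_of_size {0..t} m"
    proof
      show "mset ` ?Z \<subseteq> multisets_of_size {0..t} m"
        by (auto simp: multisets_of_size_def)
      show "multisets_of_size {0..t} m \<subseteq> mset ` ?Z"
      proof
        fix M assume M: "M \<in> multisets_of_size {0..t} m"
        let ?l = "rev (sorted_list_of_multiset M)"
        have "?l \<in> ?Z"
          using M by (auto simp: sorted_wrt_rev multisets_of_size_def simp flip: size_mset)
        then show "M \<in> mset ` ?Z" by (rule rev_image_eqI) simp
      qed
    qed
  qed
  then have "card ?Z = card (multisets_of_size {0..t} m)" by (rule bij_betw_same_card)
  also have "\<dots> = (m + t) choose m" by (simp add: card_multisets_of_size add.commute)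
  finally show ?thesis .
qed

lemma perimeter_nonincreasing:
  assumes "xs \<noteq> []" "sorted_wrt (\<ge>) xs"
  shows "perimeter xs = hd xs + length xs - 1"
proof -
  have "Max (set xs) = hd xs"
    using assms by (cases xs) (auto intro!: Max_eqI)
  then show ?thesis by (simp add: perimeter_def)
qed

lemma finite_strict_mono_le:
  assumes "strict_mono (v :: nat \<Rightarrow> nat)"
  shows "finite {t. v t \<le> n}"
  by (rule finite_subset[of _ "{..n}"])
     (auto intro: order.trans[OF strict_mono_imp_increasing[OF assms]])

lemma card_nonincreasing_lists_by_head:
  assumes "strict_mono v"
  shows "card {ys::nat list. ys \<noteq> [] \<and> sorted_wrt (\<ge>) ys \<and> v (hd ys) + length ys - 1 = n}
    = (\<Sum>t | v t \<le> n. (n - v t + t) choose (n - v t))"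
proof -
  define Z where "Z t = {zs::nat list. length zs = n - v t \<and> sorted_wrt (\<ge>) zs \<and> (\<forall>z\<in>set zs. z \<le> t)}"
    for t
  have "{ys::nat list. ys \<noteq> [] \<and> sorted_wrt (\<ge>) ys \<and> v (hd ys) + length ys - 1 = n}
      = (\<lambda>(t, zs). t # zs) ` (SIGMA t:{t. v t \<le> n}. Z t)"
  proof (intro equalityI subsetI)
    fix ys assume ys: "ys \<in> {ys. ys \<noteq> [] \<and> sorted_wrt (\<ge>) ys \<and> v (hd ys) + length ys - 1 = n}"
    then obtain t zs where "ys = t # zs" by (cases ys) auto
    moreover have "(t, zs) \<in> (SIGMA t:{t. v t \<le> n}. Z t)"
      using ys \<open>ys = t # zs\<close> by (auto simp: Z_def)
    ultimately show "ys \<in> (\<lambda>(t, zs). t # zs) ` (SIGMA t:{t. v t \<le> n}. Z t)" by force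
  qed (auto simp: Z_def)
  moreover have "card ((\<lambda>(t, zs). t # zs) ` (SIGMA t:{t. v t \<le> n}. Z t))
      = card (SIGMA t:{t. v t \<le> n}. Z t)"
    by (rule card_image) (auto simp: inj_on_def)
  moreover have "finite (Z t)" for t
  proof -
    have "Z t \<subseteq> {zs. set zs \<subseteq> {..t} \<and> length zs = n - v t}" by (auto simp: Z_def)
    then show ?thesis by (rule finite_subset) (simp add: finite_lists_length_eq)
  qed
  then have "card (SIGMA t:{t. v t \<le> n}. Z t) = (\<Sum>t | v t \<le> n. card (Z t))"
    using finite_strict_mono_le[OF assms] by (simp add: card_SigmaI)
  ultimately show ?thesis
    by (simp add: Z_def card_nonincreasing_lists_bounded)
qed

lemma card_partitions_perimeter_parts_in_range:
  assumes "strict_mono v" "0 < v 0"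
  shows "card {p. is_partition p \<and> perimeter p = n \<and> set p \<subseteq> range v}
    = (\<Sum>t | v t \<le> n. (n - v t + t) choose (n - v t))"
proof -
  let ?T = "{ys::nat list. ys \<noteq> [] \<and> sorted_wrt (\<ge>) ys \<and> v (hd ys) + length ys - 1 = n}"
  have inj: "inj v" using assms(1) strict_mono_imp_inj_on by blast
  have pos: "0 < v t" for t
    using assms strict_mono_less_eq[OF assms(1), of 0 t] by simp
  have sorted_map: "sorted_wrt (\<ge>) (map v ys) \<longleftrightarrow> sorted_wrt (\<ge>) ys" for ys
    by (simp add: sorted_wrt_map strict_mono_less_eq[OF assms(1)])
  have map_mem: "is_partition (map v ys) \<and> perimeter (map v ys) = n \<longleftrightarrow> ys \<in> ?T" for ys
    using sorted_map[of ys] perimeter_nonincreasing[of "map v ys"] pos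
    by (cases ys) (auto simp: is_partition_def)
  have "{p. is_partition p \<and> perimeter p = n \<and> set p \<subseteq> range v} = map v ` ?T"
  proof (intro equalityI subsetI)
    fix p assume p: "p \<in> {p. is_partition p \<and> perimeter p = n \<and> set p \<subseteq> range v}"
    then have p_eq: "p = map v (map (inv v) p)"
      by (auto simp: f_inv_into_f intro!: map_idI[symmetric])
    with p have "map (inv v) p \<in> ?T"
      using map_mem[of "map (inv v) p"] by simp
    with p_eq show "p \<in> map v ` ?T" by blast
  qed (use map_mem in auto)
  moreover have "inj_on (map v) ?T"
    using inj_mapI[OF inj] by (rule inj_on_subset) simp
  ultimately have "card {p. is_partition p \<and> perimeter p = n \<and> set p \<subseteq> range v} = card ?T"
    by (simp add: card_image)
  with card_nonincreasing_lists_by_head[OF assms(1)] show ?thesis by simp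
qed

text \<open>The t-th positive integer congruent to a or b modulo d, counting from t = 0.\<close>
definition allowed_part :: "nat \<Rightarrow> nat \<Rightarrow> nat \<Rightarrow> nat \<Rightarrow> nat" where
  "allowed_part d a b t = (if even t then a else b) + d * (t div 2)"

lemma allowed_part_even [simp]: "allowed_part d a b (2 * k) = a + d * k"
  and allowed_part_odd [simp]: "allowed_part d a b (Suc (2 * k)) = b + d * k"
  by (simp_all add: allowed_part_def)

lemma strict_mono_allowed_part:
  assumes "a < b" "b < a + d"
  shows "strict_mono (allowed_part d a b)"
proof (rule strict_mono_Suc_iff[THEN iffD2], intro allI)
  fix t
  show "allowed_part d a b t < allowed_part d a b (Suc t)"
  proof (cases "even t")
    case True then show ?thesis using assms by (auto elim!: evenE)
  next
    case False
    then obtain k where "t = Suc (2 * k)" by (auto elim!: oddE)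
    then show ?thesis using assms by (simp add: allowed_part_def)
  qed
qed

lemma range_allowed_part:
  assumes "0 < a" "a < b" "b \<le> d"
  shows "range (allowed_part d a b) = {x. 0 < x \<and> (x mod d = a mod d \<or> x mod d = b mod d)}"
proof (intro equalityI subsetI)
  fix x assume "x \<in> range (allowed_part d a b)"
  then show "x \<in> {x. 0 < x \<and> (x mod d = a mod d \<or> x mod d = b mod d)}"
    using assms by (auto simp: allowed_part_def)
next
  fix x assume "x \<in> {x. 0 < x \<and> (x mod d = a mod d \<or> x mod d = b mod d)}"
  then have x: "0 < x" "x mod d = a \<or> x mod d = b mod d"
    using assms by auto
  have x_eq: "x = x mod d + d * (x div d)" by simp
  consider "x mod d = a" | "x mod d = b" | "b = d" "x mod d = 0"
    using x(2) assms by (cases "b = d") auto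
  then show "x \<in> range (allowed_part d a b)"
  proof cases
    case 1
    then have "x = allowed_part d a b (2 * (x div d))" using x_eq by simp
    then show ?thesis by blast
  next
    case 2
    then have "x = allowed_part d a b (2 * (x div d) + 1)" using x_eq by simp
    then show ?thesis by blast
  next
    case 3
    then have "x = allowed_part d a b (2 * (x div d - 1) + 1)"
      using x_eq x(1) by (cases "x div d") auto
    then show ?thesis by blast
  qed
qed

lemma ell_eq_sum_allowed_part:
  assumes "0 < a" "a < b" "b \<le> d"
  shows "ell d a b n = (\<Sum>t | allowed_part d a b t \<le> n.
      (n - allowed_part d a b t + t) choose (n - allowed_part d a b t))"
proof -
  have "{p. is_partition p \<and> perimeter p = n \<and> (\<forall>x\<in>set p. x mod d = a mod d \<or> x mod d = b mod d)}
      = {p. is_partition p \<and> perimeter p = n \<and> set p \<subseteq> range (allowed_part d a b)}"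
    using range_allowed_part[OF assms] by (auto simp: is_partition_def)
  moreover have "strict_mono (allowed_part d a b)" "0 < allowed_part d a b 0"
    using assms by (simp_all add: strict_mono_allowed_part allowed_part_def)
  ultimately show ?thesis
    unfolding ell_def by (simp add: card_partitions_perimeter_parts_in_range)
qed

lemma sum_split_parity:
  assumes "finite (A :: nat set)"
  shows "sum g A = (\<Sum>k | 2 * k \<in> A. g (2 * k)) + (\<Sum>k | Suc (2 * k) \<in> A. g (Suc (2 * k)))"
proof -
  let ?E = "{k. 2 * k \<in> A}" and ?O = "{k. Suc (2 * k) \<in> A}"
  have inj_even: "inj (\<lambda>k::nat. 2 * k)" and inj_odd: "inj (\<lambda>k::nat. Suc (2 * k))"
    by (auto intro: injI)
  have "A = (\<lambda>k. 2 * k) ` ?E \<union> (\<lambda>k. Suc (2 * k)) ` ?O"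
  proof (intro equalityI subsetI)
    fix t assume "t \<in> A"
    then show "t \<in> (\<lambda>k. 2 * k) ` ?E \<union> (\<lambda>k. Suc (2 * k)) ` ?O"
      by (cases "even t") (auto elim!: evenE oddE)
  qed auto
  moreover have "(\<lambda>k. 2 * k) ` ?E \<inter> (\<lambda>k. Suc (2 * k)) ` ?O = {}"
    by (auto dest: arg_cong[of _ _ even])
  moreover have "finite ?E" "finite ?O"
    using finite_vimageI[OF assms inj_even] finite_vimageI[OF assms inj_odd]
    by (simp_all add: vimage_def)
  ultimately have "sum g A = sum g ((\<lambda>k. 2 * k) ` ?E) + sum g ((\<lambda>k. Suc (2 * k)) ` ?O)"
    by (metis finite_imageI sum.union_disjoint)
  also have "\<dots> = (\<Sum>k\<in>?E. g (2 * k)) + (\<Sum>k\<in>?O. g (Suc (2 * k)))"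
    using inj_even inj_odd by (simp add: sum.reindex inj_on_def)
  finally show ?thesis .
qed

lemma int_le_div_iff_mult_le:
  fixes k x d :: int
  assumes "0 < d"
  shows "k \<le> x div d \<longleftrightarrow> k * d \<le> x"
  by (smt (verit) assms minus_mult_div_eq_mod mult.commute
      nonzero_mult_div_cancel_right pos_mod_sign zdiv_mono1)

lemma int_interval_div_eq_image:
  fixes c d n :: nat
  assumes "0 < d"
  shows "{0..(int n - int c) div int d} = int ` {k. c + d * k \<le> n}"
proof (intro equalityI subsetI)
  fix k :: int assume "k \<in> {0..(int n - int c) div int d}"
  then have "0 \<le> k" "k * int d \<le> int n - int c"
    using assms by (simp_all add: int_le_div_iff_mult_le)
  then have "int (c + d * nat k) \<le> int n"
    by (simp add: mult.commute)
  then have "c + d * nat k \<le> n"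
    by (simp only: of_nat_le_iff)
  with \<open>0 \<le> k\<close> show "k \<in> int ` {k. c + d * k \<le> n}"
    by (intro image_eqI[of _ _ "nat k"]) auto
next
  fix k assume "k \<in> int ` {k. c + d * k \<le> n}"
  then obtain j where j: "k = int j" "c + d * j \<le> n" by auto
  then have "int (c + d * j) \<le> int n" by (simp only: of_nat_le_iff)
  with j(1) show "k \<in> {0..(int n - int c) div int d}"
    using assms by (simp add: int_le_div_iff_mult_le mult.commute)
qed

lemma sum_int_binomial_eq:
  fixes c d e n :: nat
  assumes "0 < d"
  shows "(\<Sum>k::int = 0..(int n - int c) div int d.
        int (nat (2*k + int e + int n - int c - int d * k) choose nat (int n - int c - int d * k)))
    = int (\<Sum>k | c + d * k \<le> n. (n - (c + d * k) + (2 * k + e)) choose (n - (c + d * k)))"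
proof -
  have "(\<Sum>k::int = 0..(int n - int c) div int d.
        int (nat (2*k + int e + int n - int c - int d * k) choose nat (int n - int c - int d * k)))
    = (\<Sum>k | c + d * k \<le> n.
        int (nat (2 * int k + int e + int n - int c - int d * int k)
          choose nat (int n - int c - int d * int k)))"
    by (simp add: int_interval_div_eq_image[OF assms] sum.reindex)
  also have "\<dots> = (\<Sum>k | c + d * k \<le> n. int ((n - (c + d * k) + (2 * k + e)) choose (n - (c + d * k))))"
  proof (rule sum.cong)
    fix k assume "k \<in> {k. c + d * k \<le> n}"
    then have "2 * int k + int e + int n - int c - int d * int k = int (n - (c + d * k) + (2 * k + e))"
      and "int n - int c - int d * int k = int (n - (c + d * k))"
      by (simp_all add: of_nat_diff)
    then show "int (nat (2 * int k + int e + int n - int c - int d * int k)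
          choose nat (int n - int c - int d * int k))
        = int ((n - (c + d * k) + (2 * k + e)) choose (n - (c + d * k)))"
      by (simp only: nat_int)
  qed simp
  finally show ?thesis by simp
qed

theorem mainTheorem9:
  fixes d a b n :: nat
  assumes "d \<ge> 2" and "0 < a" and "a < b" and "b \<le> d" and "n \<ge> 1"
  shows "int (ell d a b n) =
    (\<Sum>k::int = 0..(int n - int a) div int d.
        int (nat (2*k + int n - int a - int d * k) choose nat (int n - int a - int d * k)))
  + (\<Sum>k::int = 0..(int n - int b) div int d.
        int (nat (2*k + 1 + int n - int b - int d * k) choose nat (int n - int b - int d * k)))"
proof -
  let ?g = "\<lambda>t. (n - allowed_part d a b t + t) choose (n - allowed_part d a b t)"
  have d_pos: "0 < d" using assms by simp
  have "finite {t. allowed_part d a b t \<le> n}"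
    using assms by (simp add: finite_strict_mono_le strict_mono_allowed_part)
  then have "ell d a b n = (\<Sum>k | a + d * k \<le> n. ?g (2 * k)) + (\<Sum>k | b + d * k \<le> n. ?g (Suc (2 * k)))"
    using assms by (simp only: ell_eq_sum_allowed_part sum_split_parity mem_Collect_eq
        allowed_part_even allowed_part_odd)
  also have "\<dots> =
      (\<Sum>k | a + d * k \<le> n. (n - (a + d * k) + 2 * k) choose (n - (a + d * k)))
    + (\<Sum>k | b + d * k \<le> n. (n - (b + d * k) + (2 * k + 1)) choose (n - (b + d * k)))"
    by (intro arg_cong2[where f = "(+)"] sum.cong) auto
  finally show ?thesis
    using sum_int_binomial_eq[where c = a and e = 0, OF d_pos]
      sum_int_binomial_eq[where c = b and e = 1, OF d_pos]
    by simp
qed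

end
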